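(* Let $\alpha\in(1,\infty)$, let $p_X$ be a distribution on a finite set $\mathcal X$ and $p_{Y\mid X}$ a channel to a finite set $\mathcal Y$, and define for channels $\tilde q_{Y\mid X}$ and reverse channels $r_{X\mid Y}$ $$\tilde F_\alpha^{\mathrm C}(\tilde q_{Y\mid X},r_{X\mid Y}):=\frac{\alpha}{1-\alpha}D(p_X\tilde q_{Y\mid X}\|p_Xp_{Y\mid X})+\mathbb E^{p_X\tilde q_{Y\mid X}}\!\left[\log\frac{r_{X\mid Y}(X\mid Y)}{p_X(X)}\right].$$ Then: (1) for fixed $\tilde q_{Y\mid X}$, $r_{X\mid Y}\mapsto\tilde F_\alpha^{\mathrm C}(\tilde q_{Y\mid X},r_{X\mid Y})$ is maximized by $r^*_{X\mid Y}(x\mid y)=\frac{p_X(x)\tilde q_{Y\mid X}(y\mid x)}{\sum_{x'}p_X(x')\tilde q_{Y\mid X}(y\mid x')}$; (2) for fixed $r_{X\mid Y}$, $\tilde q_{Y\mid X}\mapsto\tilde F_\alpha^{\mathrm C}(\tilde q_{Y\mid X},r_{X\mid Y})$ is maximized by $\tilde q^*_{Y\mid X}(y\mid x)=\frac{p_{Y\mid X}(y\mid x)r_{X\mid Y}(x\mid y)^{1-1/\alpha}}{\sum_{y'}p_{Y\mid X}(y'\mid x)r_{X\mid Y}(x\mid y')^{1-1/\alpha}}$.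
   Context: $\log$ is natural; $D$ is the Kullback–Leibler divergence. A channel $\tilde q_{Y\mid X}$ is a family $\{\tilde q_{Y\mid X}(\cdot\mid x)\}_{x\in\mathcal X}$ of distributions on $\mathcal Y$; a reverse channel $r_{X\mid Y}$ is a family $\{r_{X\mid Y}(\cdot\mid y)\}_{y\in\mathcal Y}$ of distributions on $\mathcal X$. $p_X\tilde q_{Y\mid X}$ denotes the joint distribution $p_X(x)\tilde q_{Y\mid X}(y\mid x)$. *)

theory Defs
  imports "HOL-Analysis.Analysis"
begin

definition is_dist :: "('a::finite \<Rightarrow> real) \<Rightarrow> bool" where
  "is_dist P \<longleftrightarrow> (\<forall>a. 0 \<le> P a) \<and> (\<Sum>a\<in>UNIV. P a) = 1"

text \<open>A channel W : X -> Y, W x y = W(y|x).  A reverse channel r : Y -> X is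
  a channel with the roles swapped, r y x = r(x|y).\<close>
definition is_channel :: "('a::finite \<Rightarrow> 'b::finite \<Rightarrow> real) \<Rightarrow> bool" where
  "is_channel W \<longleftrightarrow> (\<forall>x. is_dist (W x))"

definition kl_div :: "('a::finite \<Rightarrow> real) \<Rightarrow> ('a \<Rightarrow> real) \<Rightarrow> ereal" where
  "kl_div P Q =
     (if (\<forall>a. Q a = 0 \<longrightarrow> P a = 0)
      then ereal (\<Sum>a\<in>UNIV. if P a = 0 then 0 else P a * ln (P a / Q a))
      else \<infinity>)"

definition F_C :: "real \<Rightarrow> ('x::finite \<Rightarrow> real) \<Rightarrow> ('x \<Rightarrow> 'y::finite \<Rightarrow> real)
                   \<Rightarrow> ('x \<Rightarrow> 'y \<Rightarrow> real) \<Rightarrow> ('y \<Rightarrow> 'x \<Rightarrow> real) \<Rightarrow> ereal" where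
  "F_C \<alpha> pX pYX q r =
     ereal (\<alpha> / (1 - \<alpha>)) * kl_div (\<lambda>(x, y). pX x * q x y) (\<lambda>(x, y). pX x * pYX x y)
     + (\<Sum>(x, y)\<in>UNIV.
          if pX x * q x y = 0 then 0
          else if r y x = 0 then -\<infinity>
          else ereal (pX x * q x y * ln (r y x / pX x)))"

end

theory Submission
  imports Defs
begin

text \<open>
  Call \<open>(q, r)\<close> admissible if \<open>p\<^sub>X q\<close> vanishes wherever \<open>p\<^sub>Y\<^sub>|\<^sub>X\<close> or \<open>r\<close> does. Off this set
  \<open>F\<^sup>C\<^sub>\<alpha>\<close> is \<open>-\<infinity>\<close> (an infinite divergence gets the negative weight \<open>\<alpha>/(1-\<alpha>)\<close>, or a
  \<open>log r\<close> term is \<open>-\<infinity>\<close>), and both optimal choices keep an admissible pair admissible.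
  On admissible pairs both claims are instances of Gibbs' inequality
  \<open>\<Sum> a log (b/a) \<le> \<Sum> b - \<Sum> a\<close>. For (1), where \<open>r*\<close> is the posterior of \<open>p\<^sub>X q\<close>, take \<open>a = p\<^sub>X q\<close> and \<open>b(x,y) = q\<^sub>Y(y) r(x|y)\<close>:
  the objectives at \<open>r\<close> and \<open>r*\<close> differ by exactly \<open>\<Sum> a log (b/a)\<close>, and \<open>\<Sum> b = \<Sum> a = 1\<close>.
  For (2) let \<open>Z(x)\<close> be the normalizer of the tilted channel \<open>q*(\<cdot>|x)\<close>; since \<open>\<alpha>/(1-\<alpha>) \<cdot> (1 - 1/\<alpha>) = -1\<close>,
  \<open>F(q, r) = \<Sum>\<^sub>x p\<^sub>X(x) (\<alpha>/(\<alpha>-1) log Z(x) - log p\<^sub>X(x)) + \<alpha>/(\<alpha>-1) \<Sum> a log (b/a)\<close>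
  with \<open>a = p\<^sub>X q\<close> and \<open>b = p\<^sub>X q*\<close>, and the last sum is \<open>\<le> 0\<close>, with equality for \<open>q = q*\<close>.
\<close>

lemma sum_ereal_eq_MInfty:
  fixes f :: "'a \<Rightarrow> ereal"
  assumes "finite A" "\<And>i. i \<in> A \<Longrightarrow> f i \<noteq> \<infinity>" "i \<in> A" "f i = -\<infinity>"
  shows "sum f A = -\<infinity>"
  using assms
proof (induction A rule: finite_induct)
  case (insert j A)
  have "sum f A \<noteq> \<infinity>" using insert by (simp add: sum_Pinfty)
  moreover have "sum f A = -\<infinity>" if "j \<noteq> i" using insert that by auto
  ultimately show ?case using insert by (cases "f j"; cases "j = i") auto
qed simp

lemma gibbs_inequality:
  fixes a b :: "'i \<Rightarrow> real"
  assumes "finite A"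
    and "\<And>i. i \<in> A \<Longrightarrow> 0 \<le> a i" "\<And>i. i \<in> A \<Longrightarrow> 0 \<le> b i"
    and "\<And>i. i \<in> A \<Longrightarrow> a i \<noteq> 0 \<Longrightarrow> b i \<noteq> 0"
  shows "(\<Sum>i\<in>A. if a i = 0 then 0 else a i * ln (b i / a i)) \<le> sum b A - sum a A"
proof -
  have "(if a i = 0 then 0 else a i * ln (b i / a i)) \<le> b i - a i" if "i \<in> A" for i
  proof (cases "a i = 0")
    case False
    with assms(2-4) that have a: "0 < a i" and "0 < b i" by (auto simp: order.strict_iff_order)
    then have "a i * ln (b i / a i) \<le> a i * (b i / a i - 1)"
      by (intro mult_left_mono ln_le_minus_one) auto
    with a show ?thesis by (simp add: right_diff_distrib)
  qed (use assms(3) that in simp)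
  then show ?thesis by (simp add: sum_subtractf[symmetric] sum_mono)
qed

lemma sum_UNIV_prod:
  fixes f :: "'a::finite \<Rightarrow> 'b::finite \<Rightarrow> 'c::comm_monoid_add"
  shows "(\<Sum>(x, y)\<in>UNIV. f x y) = (\<Sum>x\<in>UNIV. \<Sum>y\<in>UNIV. f x y)"
  by (simp only: sum.cartesian_product UNIV_Times_UNIV)

lemma sum_mult_channel:
  assumes "is_channel q"
  shows "(\<Sum>(x, y)\<in>UNIV. f x * q x y) = (\<Sum>x\<in>UNIV. f x)"
  using assms by (simp add: sum_UNIV_prod sum_distrib_left[symmetric] is_channel_def is_dist_def)

definition F_C_admissible ::
    "('x::finite \<Rightarrow> real) \<Rightarrow> ('x \<Rightarrow> 'y::finite \<Rightarrow> real) \<Rightarrow> ('x \<Rightarrow> 'y \<Rightarrow> real) \<Rightarrow> ('y \<Rightarrow> 'x \<Rightarrow> real) \<Rightarrow> bool" where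
  "F_C_admissible pX pYX q r \<longleftrightarrow> (\<forall>x y. pX x * q x y \<noteq> 0 \<longrightarrow> pYX x y \<noteq> 0 \<and> r y x \<noteq> 0)"

definition F_C_term :: "real \<Rightarrow> ('x \<Rightarrow> real) \<Rightarrow> ('x \<Rightarrow> 'y \<Rightarrow> real) \<Rightarrow> ('x \<Rightarrow> 'y \<Rightarrow> real)
    \<Rightarrow> ('y \<Rightarrow> 'x \<Rightarrow> real) \<Rightarrow> 'x \<Rightarrow> 'y \<Rightarrow> real" where
  "F_C_term \<alpha> pX pYX q r x y =
     (if pX x * q x y = 0 then 0
      else pX x * q x y * (\<alpha> / (1 - \<alpha>) * ln (q x y / pYX x y) + ln (r y x / pX x)))"

lemma F_C_eq_sum_F_C_term:
  assumes "F_C_admissible pX pYX q r"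
  shows "F_C \<alpha> pX pYX q r = ereal (\<Sum>(x, y)\<in>UNIV. F_C_term \<alpha> pX pYX q r x y)"
proof -
  have "kl_div (\<lambda>(x, y). pX x * q x y) (\<lambda>(x, y). pX x * pYX x y) =
      ereal (\<Sum>(x, y)\<in>UNIV. if pX x * q x y = 0 then 0 else pX x * q x y * ln (q x y / pYX x y))"
    using assms unfolding kl_div_def F_C_admissible_def by (auto intro!: sum.cong)
  moreover have "(\<Sum>(x, y)\<in>UNIV.
          if pX x * q x y = 0 then 0
          else if r y x = 0 then -\<infinity>
          else ereal (pX x * q x y * ln (r y x / pX x))) =
      ereal (\<Sum>(x, y)\<in>UNIV. if pX x * q x y = 0 then 0 else pX x * q x y * ln (r y x / pX x))"
    unfolding sum_ereal[symmetric] using assms by (intro sum.cong) (auto simp: F_C_admissible_def)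
  ultimately have "F_C \<alpha> pX pYX q r = ereal
      (\<alpha> / (1 - \<alpha>) * (\<Sum>(x, y)\<in>UNIV. if pX x * q x y = 0 then 0 else pX x * q x y * ln (q x y / pYX x y))
       + (\<Sum>(x, y)\<in>UNIV. if pX x * q x y = 0 then 0 else pX x * q x y * ln (r y x / pX x)))"
    unfolding F_C_def by simp
  also have "\<dots> = ereal (\<Sum>(x, y)\<in>UNIV. F_C_term \<alpha> pX pYX q r x y)"
    unfolding F_C_term_def sum_distrib_left sum.distrib[symmetric]
    by (intro arg_cong[where f = ereal] sum.cong) (auto simp: algebra_simps)
  finally show ?thesis .
qed

lemma F_C_eq_MInfty_if_not_admissible:
  assumes "1 < \<alpha>" "\<not> F_C_admissible pX pYX q r"
  shows "F_C \<alpha> pX pYX q r = -\<infinity>"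
proof -
  let ?D = "kl_div (\<lambda>(x, y). pX x * q x y) (\<lambda>(x, y). pX x * pYX x y)"
  let ?S = "\<Sum>(x, y)\<in>UNIV.
          if pX x * q x y = 0 then 0
          else if r y x = 0 then -\<infinity>
          else ereal (pX x * q x y * ln (r y x / pX x))"
  have "?S \<noteq> \<infinity>" by (simp add: sum_Pinfty)
  have "\<alpha> / (1 - \<alpha>) < 0" using assms(1) by (simp add: divide_pos_neg)
  show ?thesis
  proof (cases "\<forall>x y. pX x * q x y \<noteq> 0 \<longrightarrow> pYX x y \<noteq> 0")
    case False
    then have "?D = \<infinity>" unfolding kl_div_def by auto
    with \<open>?S \<noteq> \<infinity>\<close> \<open>\<alpha> / (1 - \<alpha>) < 0\<close> show ?thesis unfolding F_C_def by (cases ?S) auto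
  next
    case True
    then obtain x y where xy: "pX x * q x y \<noteq> 0" "r y x = 0"
      using assms(2) unfolding F_C_admissible_def by auto
    have "?S = -\<infinity>"
      by (rule sum_ereal_eq_MInfty[where i = "(x, y)"]) (use xy in \<open>auto split: if_splits\<close>)
    moreover have "\<bar>?D\<bar> \<noteq> \<infinity>" using True unfolding kl_div_def by auto
    ultimately show ?thesis unfolding F_C_def by (cases ?D) auto
  qed
qed

lemma F_C_le_by_F_C_terms:
  assumes "1 < \<alpha>"
    and "F_C_admissible pX pYX q r \<Longrightarrow> F_C_admissible pX pYX q' r'"
    and "F_C_admissible pX pYX q r \<Longrightarrow>
      (\<Sum>(x, y)\<in>UNIV. F_C_term \<alpha> pX pYX q r x y) \<le> (\<Sum>(x, y)\<in>UNIV. F_C_term \<alpha> pX pYX q' r' x y)"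
  shows "F_C \<alpha> pX pYX q r \<le> F_C \<alpha> pX pYX q' r'"
  using assms by (cases "F_C_admissible pX pYX q r")
    (simp_all add: F_C_eq_sum_F_C_term F_C_eq_MInfty_if_not_admissible)

lemma F_C_admissible_posterior:
  assumes pX: "is_dist pX" and q: "is_channel q" and adm: "F_C_admissible pX pYX q r"
    and rstar: "\<forall>x y. (\<Sum>x'\<in>UNIV. pX x' * q x' y) > 0 \<longrightarrow>
               rstar y x = pX x * q x y / (\<Sum>x'\<in>UNIV. pX x' * q x' y)"
  shows "F_C_admissible pX pYX q rstar"
  unfolding F_C_admissible_def
proof (intro allI impI conjI)
  fix x y assume P: "pX x * q x y \<noteq> 0"
  then show "pYX x y \<noteq> 0" using adm by (simp add: F_C_admissible_def)
  have nonneg: "0 \<le> pX x' * q x' y" for x'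
    using pX q by (simp add: is_dist_def is_channel_def)
  then have "0 < pX x * q x y" using P by (simp add: order.strict_iff_order)
  moreover have "pX x * q x y \<le> (\<Sum>x'\<in>UNIV. pX x' * q x' y)"
    by (rule member_le_sum) (simp_all add: nonneg)
  ultimately show "rstar y x \<noteq> 0" using rstar by auto
qed

lemma sum_F_C_term_le_posterior:
  fixes pX :: "'x::finite \<Rightarrow> real" and q :: "'x \<Rightarrow> 'y::finite \<Rightarrow> real"
  assumes pX: "is_dist pX" and q: "is_channel q" and r: "is_channel r"
    and adm: "F_C_admissible pX pYX q r"
    and rstar: "\<forall>x y. (\<Sum>x'\<in>UNIV. pX x' * q x' y) > 0 \<longrightarrow>
               rstar y x = pX x * q x y / (\<Sum>x'\<in>UNIV. pX x' * q x' y)"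
  shows "(\<Sum>(x, y)\<in>UNIV. F_C_term \<alpha> pX pYX q r x y) \<le> (\<Sum>(x, y)\<in>UNIV. F_C_term \<alpha> pX pYX q rstar x y)"
proof -
  define qY where "qY y = (\<Sum>x\<in>UNIV. pX x * q x y)" for y
  define a where "a = (\<lambda>(x, y). pX x * q x y)"
  define b where "b = (\<lambda>(x, y). qY y * r y x)"
  have pX0: "0 \<le> pX x" for x using pX by (simp add: is_dist_def)
  have q0: "0 \<le> q x y" for x y using q by (simp add: is_channel_def is_dist_def)
  have r0: "0 \<le> r y x" for x y using r by (simp add: is_channel_def is_dist_def)
  have qY0: "0 \<le> qY y" for y unfolding qY_def using pX0 q0 by (simp add: sum_nonneg)
  have pos: "0 < pX x \<and> 0 < q x y \<and> 0 < r y x \<and> 0 < qY y" if "pX x \<noteq> 0" "q x y \<noteq> 0" for x y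
  proof -
    have px: "0 < pX x" and qx: "0 < q x y" and "r y x \<noteq> 0"
      using that adm pX0[of x] q0[of x y] by (auto simp: F_C_admissible_def order.strict_iff_order)
    have "0 < pX x * q x y" using px qx by simp
    also have "\<dots> \<le> qY y"
      unfolding qY_def by (rule member_le_sum) (simp_all add: pX0 q0)
    finally have "0 < qY y" .
    with px qx \<open>r y x \<noteq> 0\<close> r0[of y x] show ?thesis by (simp add: order.strict_iff_order)
  qed
  define gap where "gap i = (if a i = 0 then 0 else a i * ln (b i / a i))" for i
  have split_term: "F_C_term \<alpha> pX pYX q r x y = F_C_term \<alpha> pX pYX q rstar x y + gap (x, y)" for x y
  proof (cases "a (x, y) = 0")
    case False
    with pos have "0 < pX x" "0 < q x y" "0 < r y x" "0 < qY y" by (auto simp: a_def)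
    moreover have "rstar y x = pX x * q x y / qY y" using rstar \<open>0 < qY y\<close> by (simp add: qY_def)
    ultimately show ?thesis using False
      by (simp add: F_C_term_def gap_def a_def b_def ln_div ln_mult algebra_simps)
  qed (simp add: F_C_term_def gap_def a_def)
  have "sum gap UNIV \<le> sum b UNIV - sum a UNIV"
    unfolding gap_def by (rule gibbs_inequality) (auto simp: a_def b_def pX0 q0 r0 qY0 dest!: pos)
  also have "sum b UNIV = sum a UNIV"
  proof -
    have "sum b UNIV = (\<Sum>y\<in>UNIV. qY y * (\<Sum>x\<in>UNIV. r y x))"
      unfolding b_def sum_UNIV_prod sum_distrib_left by (rule sum.swap)
    also have "\<dots> = (\<Sum>y\<in>UNIV. \<Sum>x\<in>UNIV. pX x * q x y)"
      using r by (simp add: is_channel_def is_dist_def qY_def)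
    also have "\<dots> = sum a UNIV"
      unfolding a_def sum_UNIV_prod by (rule sum.swap[symmetric])
    finally show ?thesis .
  qed
  finally show ?thesis
    by (simp add: split_term sum.distrib case_prod_beta)
qed

definition tilted_normalizer :: "real \<Rightarrow> ('x \<Rightarrow> 'y::finite \<Rightarrow> real) \<Rightarrow> ('y \<Rightarrow> 'x \<Rightarrow> real) \<Rightarrow> 'x \<Rightarrow> real" where
  "tilted_normalizer \<alpha> pYX r x = (\<Sum>y\<in>UNIV. pYX x y * r y x powr (1 - 1 / \<alpha>))"

lemma tilted_normalizer_pos:
  assumes pYX: "is_channel pYX" and q: "is_channel q" and adm: "F_C_admissible pX pYX q r"
    and "pX x \<noteq> 0"
  shows "0 < tilted_normalizer \<alpha> pYX r x"
proof -
  have pYX0: "0 \<le> pYX x y" for y using pYX by (simp add: is_channel_def is_dist_def)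
  obtain y where "q x y \<noteq> 0"
    using q by (metis is_channel_def is_dist_def sum.neutral zero_neq_one)
  then have "pYX x y \<noteq> 0" "r y x \<noteq> 0" using adm \<open>pX x \<noteq> 0\<close> by (auto simp: F_C_admissible_def)
  then have "0 < pYX x y * r y x powr (1 - 1 / \<alpha>)" using pYX0[of y] by simp
  also have "\<dots> \<le> tilted_normalizer \<alpha> pYX r x"
    unfolding tilted_normalizer_def by (rule member_le_sum) (simp_all add: pYX0)
  finally show ?thesis .
qed

lemma F_C_admissible_tilted:
  assumes pYX: "is_channel pYX" and q: "is_channel q" and adm: "F_C_admissible pX pYX q r"
    and qstar: "\<forall>x y. 0 < tilted_normalizer \<alpha> pYX r x \<longrightarrow>
               qstar x y = pYX x y * r y x powr (1 - 1 / \<alpha>) / tilted_normalizer \<alpha> pYX r x"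
  shows "F_C_admissible pX pYX qstar r"
  unfolding F_C_admissible_def
proof (intro allI impI)
  fix x y assume "pX x * qstar x y \<noteq> 0"
  moreover have "0 < tilted_normalizer \<alpha> pYX r x" if "pX x \<noteq> 0"
    using tilted_normalizer_pos[OF pYX q adm that] .
  ultimately show "pYX x y \<noteq> 0 \<and> r y x \<noteq> 0" using qstar by auto
qed

lemma F_C_term_tilted_decomposition:
  assumes \<alpha>: "1 < \<alpha>" and pX: "is_dist pX" and pYX: "is_channel pYX"
    and q: "is_channel q" and r: "is_channel r" and adm: "F_C_admissible pX pYX q r"
    and qstar: "\<forall>x y. 0 < tilted_normalizer \<alpha> pYX r x \<longrightarrow>
               qstar x y = pYX x y * r y x powr (1 - 1 / \<alpha>) / tilted_normalizer \<alpha> pYX r x"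
  shows "F_C_term \<alpha> pX pYX q r x y =
      pX x * q x y * (\<alpha> / (\<alpha> - 1) * ln (tilted_normalizer \<alpha> pYX r x) - ln (pX x))
      + \<alpha> / (\<alpha> - 1) * (if pX x * q x y = 0 then 0
                       else pX x * q x y * ln (pX x * qstar x y / (pX x * q x y)))"
proof (cases "pX x * q x y = 0")
  case False
  define Z where "Z = tilted_normalizer \<alpha> pYX r x"
  define k where "k = \<alpha> / (\<alpha> - 1)"
  define \<beta> where "\<beta> = 1 - 1 / \<alpha>"
  have k: "\<alpha> / (1 - \<alpha>) = - k" "k * \<beta> = 1"
    using \<alpha> by (simp_all add: k_def \<beta>_def field_simps)
  have "pYX x y \<noteq> 0" "r y x \<noteq> 0" using adm False by (auto simp: F_C_admissible_def)
  with pX pYX q r False have pos: "0 < pX x" "0 < q x y" "0 < pYX x y" "0 < r y x"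
    by (auto simp: is_dist_def is_channel_def order.strict_iff_order)
  have "0 < Z" unfolding Z_def using tilted_normalizer_pos[OF pYX q adm] pos by simp
  then have L: "ln (pX x * qstar x y / (pX x * q x y)) =
      ln (pYX x y) + \<beta> * ln (r y x) - ln Z - ln (q x y)"
    using qstar pos by (simp add: Z_def \<beta>_def ln_div ln_mult ln_powr)
  have "F_C_term \<alpha> pX pYX q r x y =
      pX x * q x y * (- k * (ln (q x y) - ln (pYX x y)) + ((k * \<beta>) * ln (r y x) - ln (pX x)))"
    using False pos unfolding F_C_term_def k by (simp add: ln_div)
  also have "\<dots> = pX x * q x y * (k * ln Z - ln (pX x))
      + k * (pX x * q x y * (ln (pYX x y) + \<beta> * ln (r y x) - ln Z - ln (q x y)))"
    by (simp add: algebra_simps)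
  finally show ?thesis
    using False unfolding L Z_def k_def by simp
qed (simp add: F_C_term_def)

lemma sum_F_C_term_le_tilted:
  fixes pX :: "'x::finite \<Rightarrow> real" and q :: "'x \<Rightarrow> 'y::finite \<Rightarrow> real"
  assumes \<alpha>: "1 < \<alpha>" and pX: "is_dist pX" and pYX: "is_channel pYX"
    and q: "is_channel q" and r: "is_channel r" and qs: "is_channel qstar"
    and adm: "F_C_admissible pX pYX q r"
    and qstar: "\<forall>x y. 0 < tilted_normalizer \<alpha> pYX r x \<longrightarrow>
               qstar x y = pYX x y * r y x powr (1 - 1 / \<alpha>) / tilted_normalizer \<alpha> pYX r x"
  shows "(\<Sum>(x, y)\<in>UNIV. F_C_term \<alpha> pX pYX q r x y) \<le> (\<Sum>(x, y)\<in>UNIV. F_C_term \<alpha> pX pYX qstar r x y)"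
proof -
  define k where "k = \<alpha> / (\<alpha> - 1)"
  define K where "K x = k * ln (tilted_normalizer \<alpha> pYX r x) - ln (pX x)" for x
  define a where "a = (\<lambda>(x, y). pX x * q x y)"
  define b where "b = (\<lambda>(x, y). pX x * qstar x y)"
  define gap where "gap i = (if a i = 0 then 0 else a i * ln (b i / a i))" for i
  have "0 < k" using \<alpha> by (simp add: k_def)
  have term_q: "F_C_term \<alpha> pX pYX q r x y = pX x * K x * q x y + k * gap (x, y)" for x y
    using F_C_term_tilted_decomposition[OF \<alpha> pX pYX q r adm qstar, of x y]
    by (simp add: K_def k_def gap_def a_def b_def mult_ac)
  have "F_C_admissible pX pYX qstar r" using F_C_admissible_tilted[OF pYX q adm qstar] .
  then have term_qstar: "F_C_term \<alpha> pX pYX qstar r x y = pX x * K x * qstar x y" for x y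
    using F_C_term_tilted_decomposition[OF \<alpha> pX pYX qs r _ qstar, of x y]
    by (simp add: K_def k_def mult_ac)
  have support: "pX x * qstar x y \<noteq> 0" if "pX x * q x y \<noteq> 0" for x y
  proof -
    have "pYX x y \<noteq> 0" "r y x \<noteq> 0" using adm that by (auto simp: F_C_admissible_def)
    moreover have "0 < tilted_normalizer \<alpha> pYX r x" using tilted_normalizer_pos[OF pYX q adm] that by simp
    ultimately show ?thesis using qstar that by simp
  qed
  have "sum gap UNIV \<le> sum b UNIV - sum a UNIV"
    unfolding gap_def by (rule gibbs_inequality)
      (use pX q qs support in \<open>auto simp: a_def b_def is_dist_def is_channel_def\<close>)
  also have "sum b UNIV - sum a UNIV = 0"
    using sum_mult_channel[OF q, of pX] sum_mult_channel[OF qs, of pX]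
    by (simp add: a_def b_def)
  finally have "sum gap UNIV \<le> 0" .
  have "(\<Sum>(x, y)\<in>UNIV. F_C_term \<alpha> pX pYX q r x y) =
      (\<Sum>(x, y)\<in>UNIV. pX x * K x * q x y) + k * sum gap UNIV"
    by (simp add: term_q sum.distrib case_prod_beta sum_distrib_left)
  also have "\<dots> = (\<Sum>x\<in>UNIV. pX x * K x) + k * sum gap UNIV"
    by (simp only: sum_mult_channel[OF q])
  also have "\<dots> \<le> (\<Sum>x\<in>UNIV. pX x * K x)"
    using \<open>0 < k\<close> \<open>sum gap UNIV \<le> 0\<close> by (simp add: mult_nonneg_nonpos)
  also have "\<dots> = (\<Sum>(x, y)\<in>UNIV. F_C_term \<alpha> pX pYX qstar r x y)"
    by (simp add: term_qstar sum_mult_channel[OF qs])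
  finally show ?thesis .
qed

lemma F_C_le_posterior:
  assumes "1 < \<alpha>" "is_dist pX" "is_channel q" "is_channel r"
    and "\<forall>x y. (\<Sum>x'\<in>UNIV. pX x' * q x' y) > 0 \<longrightarrow>
               rstar y x = pX x * q x y / (\<Sum>x'\<in>UNIV. pX x' * q x' y)"
  shows "F_C \<alpha> pX pYX q r \<le> F_C \<alpha> pX pYX q rstar"
  by (rule F_C_le_by_F_C_terms[OF assms(1) F_C_admissible_posterior[OF assms(2,3) _ assms(5)]
        sum_F_C_term_le_posterior[OF assms(2-4) _ assms(5)]])

lemma F_C_le_tilted:
  assumes "1 < \<alpha>" "is_dist pX" "is_channel pYX" "is_channel q" "is_channel r" "is_channel qstar"
    and "\<forall>x y. 0 < tilted_normalizer \<alpha> pYX r x \<longrightarrow>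
               qstar x y = pYX x y * r y x powr (1 - 1 / \<alpha>) / tilted_normalizer \<alpha> pYX r x"
  shows "F_C \<alpha> pX pYX q r \<le> F_C \<alpha> pX pYX qstar r"
  by (rule F_C_le_by_F_C_terms[OF assms(1) F_C_admissible_tilted[OF assms(3,4) _ assms(7)]
        sum_F_C_term_le_tilted[OF assms(1-6) _ assms(7)]])

theorem proposition3:
  fixes \<alpha> :: real
    and pX :: "'x::finite \<Rightarrow> real"
    and pYX :: "'x \<Rightarrow> 'y::finite \<Rightarrow> real"
  assumes alpha: "1 < \<alpha>"
    and pX: "is_dist pX"
    and pYX: "is_channel pYX"
  shows
    "(\<forall>q r rstar. is_channel q \<and> is_channel r \<and> is_channel rstar \<and>
        (\<forall>x y. (\<Sum>x'\<in>UNIV. pX x' * q x' y) > 0 \<longrightarrow>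
               rstar y x = pX x * q x y / (\<Sum>x'\<in>UNIV. pX x' * q x' y))
      \<longrightarrow> F_C \<alpha> pX pYX q r \<le> F_C \<alpha> pX pYX q rstar)
   \<and>
    (\<forall>r q qstar. is_channel r \<and> is_channel q \<and> is_channel qstar \<and>
        (\<forall>x y. (\<Sum>y'\<in>UNIV. pYX x y' * r y' x powr (1 - 1 / \<alpha>)) > 0 \<longrightarrow>
               qstar x y = pYX x y * r y x powr (1 - 1 / \<alpha>)
                           / (\<Sum>y'\<in>UNIV. pYX x y' * r y' x powr (1 - 1 / \<alpha>)))
      \<longrightarrow> F_C \<alpha> pX pYX q r \<le> F_C \<alpha> pX pYX qstar r)"
  using F_C_le_posterior[OF alpha pX] F_C_le_tilted[OF alpha pX pYX]
  unfolding tilted_normalizer_def by blast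

end
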